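(* In the uKP setting described in the context, fix the integer $s$ and integers $l,m,n$. Then \[ \tau(l+1,m,n)=\max_{0\le k_1\le N}\bigl(\tau_c(N-k_1,N+1)-k_1a_1\bigr). \]
   Context: Ultradiscrete permanent (UP): for a real $N\times N$ matrix $A=(a_{ij})$, $\max A\equiv\max_{\pi}\sum_{i=1}^N a_{i\pi(i)}$ over all permutations $\pi$ of $\{1,\dots,N\}$; $\max[\bm{b}_1\ \dots\ \bm{b}_N]$ is the UP of the matrix with columns $\bm{b}_j$. uKP setting: $N\ge1$; real parameters $a_1>a_2>a_3$ and arbitrary real $p_i,c_i,c'_i$ ($1\le i\le N$); for integers $l,m,n,s$, $\eta_i(l,m,n,s)=p_is+\max(0,p_i-a_1)l+\max(0,p_i-a_2)m+\max(0,p_i-a_3)n+c_i$, $\eta'_i(l,m,n,s)=-p_is+\max(0,-p_i-a_1)l+\max(0,-p_i-a_2)m+\max(0,-p_i-a_3)n+c'_i$, $\phi_i(l,m,n,s)=\max(\eta_i,\eta'_i)$, and $\tau(l,m,n)=\max[\phi_i(l,m,n,s+j-1)]_{1\le i,j\le N}$ ($s$ an auxiliary fixed integer). With $l,m,n,s$ fixed, put $\bm{\phi}(j)=(\phi_i(l,m,n,s+j))_{1\le i\le N}$, and for $0\le\alpha<\beta\le N+1$ let $\tau_c(\alpha,\beta)=\max[\bm{\phi}(0)\ \dots\ \widehat{\bm{\phi}(\alpha)}\ \dots\ \widehat{\bm{\phi}(\beta)}\ \dots\ \bm{\phi}(N+1)]$, the UP of the $N$ columns $\bm{\phi}(j)$,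 $j\in\{0,\dots,N+1\}\setminus\{\alpha,\beta\}$. *)

theory Defs
  imports Complex_Main "HOL-Combinatorics.Permutations"
begin

definition upmax :: "nat \<Rightarrow> (nat \<Rightarrow> nat \<Rightarrow> real) \<Rightarrow> real" where
  "upmax N A = Max ((\<lambda>\<pi>. \<Sum>i<N. A i (\<pi> i)) ` {\<pi>. \<pi> permutes {..<N}})"

definition ueta :: "real \<Rightarrow> real \<Rightarrow> real \<Rightarrow> real \<Rightarrow> real \<Rightarrow> int \<Rightarrow> int \<Rightarrow> int \<Rightarrow> int \<Rightarrow> real" where
  "ueta a1 a2 a3 p c l m n s =
     p * of_int s + max 0 (p - a1) * of_int l + max 0 (p - a2) * of_int m
     + max 0 (p - a3) * of_int n + c"

definition uphi :: "real \<Rightarrow> real \<Rightarrow> real \<Rightarrow> real \<Rightarrow> real \<Rightarrow> real \<Rightarrow> int \<Rightarrow> int \<Rightarrow> int \<Rightarrow> int \<Rightarrow> real" where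
  "uphi a1 a2 a3 p c c' l m n s = max (ueta a1 a2 a3 p c l m n s) (ueta a1 a2 a3 (- p) c' l m n s)"

text \<open>tau(l,m,n) = max[phi_i(l,m,n,s+j-1)]_{1<=i,j<=N}; here 0-indexed rows i and columns j.\<close>
definition utau :: "nat \<Rightarrow> real \<Rightarrow> real \<Rightarrow> real \<Rightarrow> (nat \<Rightarrow> real) \<Rightarrow> (nat \<Rightarrow> real) \<Rightarrow> (nat \<Rightarrow> real)
      \<Rightarrow> int \<Rightarrow> int \<Rightarrow> int \<Rightarrow> int \<Rightarrow> real" where
  "utau N a1 a2 a3 p c c' s l m n =
     upmax N (\<lambda>i j. uphi a1 a2 a3 (p i) (c i) (c' i) l m n (s + int j))"

text \<open>tau_c(alpha,beta): UP of the columns phi(j) = (phi_i(l,m,n,s+j))_i,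
  j in {0..N+1} - {alpha,beta}, taken in increasing order of j.\<close>
definition utauc :: "nat \<Rightarrow> real \<Rightarrow> real \<Rightarrow> real \<Rightarrow> (nat \<Rightarrow> real) \<Rightarrow> (nat \<Rightarrow> real) \<Rightarrow> (nat \<Rightarrow> real)
      \<Rightarrow> int \<Rightarrow> int \<Rightarrow> int \<Rightarrow> int \<Rightarrow> nat \<Rightarrow> nat \<Rightarrow> real" where
  "utauc N a1 a2 a3 p c c' l m n s \<alpha> \<beta> =
     upmax N (\<lambda>i j. uphi a1 a2 a3 (p i) (c i) (c' i) l m n
        (s + int (sorted_list_of_set ({0..N+1} - {\<alpha>, \<beta>}) ! j)))"

end

theory Submission
  imports Defs
begin

text \<open>
  Raising \<open>l\<close> by one turns every entry \<open>\<phi>\<^sub>i(s+j)\<close> into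
  \<open>max(\<phi>\<^sub>i(s+j+1) - a\<^sub>1, \<phi>\<^sub>i(s+j))\<close>. The ultradiscrete permanent is
  multilinear in the columns, so \<open>\<tau>(l+1,m,n)\<close> is the maximum over sets \<open>E\<close> of
  columns of the permanent with column \<open>j\<close> replaced by column \<open>j+1\<close> for \<open>j \<in> E\<close>,
  minus \<open>|E| a\<^sub>1\<close>. Each \<open>\<phi>\<^sub>i\<close> is a maximum of two affine functions of \<open>s\<close>,
  hence convex, and convexity lets an exchange argument push the shifted columns to
  the right without decreasing the permanent. So only \<open>E = {N-k,\<dots>,N-1}\<close> matter,
  and these select exactly the columns \<open>{0,\<dots>,N+1} - {N-k, N+1}\<close>.
\<close>

lemma sum_le_sum_differing_at_two:
  fixes f g :: "'a \<Rightarrow> 'b::ordered_comm_monoid_add"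
  assumes "finite A" "r \<in> A" "r' \<in> A" "r \<noteq> r'"
    and "\<And>i. i \<in> A - {r, r'} \<Longrightarrow> f i = g i"
    and "f r + f r' \<le> g r + g r'"
  shows "sum f A \<le> sum g A"
proof -
  have split: "sum h A = h r + h r' + sum h (A - {r, r'})" for h :: "'a \<Rightarrow> 'b"
    using assms(1-4) by (simp add: sum.remove[of A r] sum.remove[of "A - {r}" r'] add.assoc insert_commute
        flip: Diff_insert)
  have "sum f (A - {r, r'}) = sum g (A - {r, r'})"
    using assms(5) by (rule sum.cong[OF refl])
  then show ?thesis
    using add_right_mono[OF assms(6)] by (simp add: split[of f] split[of g])
qed

lemma finite_permutations_lessThan: "finite {\<pi>. \<pi> permutes {..<N::nat}}"
  by (rule finite_permutations) simp

lemma upmax_ge: "\<pi> permutes {..<N} \<Longrightarrow> (\<Sum>i<N. A i (\<pi> i)) \<le> upmax N A"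
  unfolding upmax_def by (rule Max_ge) (use finite_permutations_lessThan in auto)

lemma upmax_attained:
  obtains \<pi> where "\<pi> permutes {..<N}" and "upmax N A = (\<Sum>i<N. A i (\<pi> i))"
proof -
  have "upmax N A \<in> (\<lambda>\<pi>. \<Sum>i<N. A i (\<pi> i)) ` {\<pi>. \<pi> permutes {..<N}}"
    unfolding upmax_def
    by (intro Max_in finite_imageI finite_permutations_lessThan) (use permutes_id in blast)
  with that show ?thesis by blast
qed

lemma upmax_le:
  assumes "\<And>\<pi>. \<pi> permutes {..<N} \<Longrightarrow> (\<Sum>i<N. A i (\<pi> i)) \<le> x"
  shows "upmax N A \<le> x"
  by (metis upmax_attained assms)

lemma upmax_mono:
  assumes "\<And>i j. i < N \<Longrightarrow> j < N \<Longrightarrow> A i j \<le> B i j"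
  shows "upmax N A \<le> upmax N B"
proof (rule upmax_le)
  fix \<pi> assume \<pi>: "\<pi> permutes {..<N}"
  have "(\<Sum>i<N. A i (\<pi> i)) \<le> (\<Sum>i<N. B i (\<pi> i))"
    using assms permutes_in_image[OF \<pi>] by (intro sum_mono) auto
  also have "\<dots> \<le> upmax N B"
    by (rule upmax_ge[OF \<pi>])
  finally show "(\<Sum>i<N. A i (\<pi> i)) \<le> upmax N B" .
qed

lemma upmax_cong:
  assumes "\<And>i j. i < N \<Longrightarrow> j < N \<Longrightarrow> A i j = B i j"
  shows "upmax N A = upmax N B"
  using assms by (intro antisym upmax_mono) auto

lemma upmax_diff_column_weights:
  "upmax N (\<lambda>i j. A i j - w j) = upmax N A - (\<Sum>j<N. w j)"
proof -
  have sum_eq: "(\<Sum>i<N. A i (\<pi> i) - w (\<pi> i)) = (\<Sum>i<N. A i (\<pi> i)) - (\<Sum>j<N. w j)"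
    if "\<pi> permutes {..<N}" for \<pi>
    using sum.permute[OF that, of w] by (simp add: sum_subtractf)
  show ?thesis
  proof (rule antisym)
    show "upmax N (\<lambda>i j. A i j - w j) \<le> upmax N A - (\<Sum>j<N. w j)"
      by (rule upmax_le) (simp add: sum_eq upmax_ge)
  next
    obtain \<pi> where \<pi>: "\<pi> permutes {..<N}" and opt: "upmax N A = (\<Sum>i<N. A i (\<pi> i))"
      by (rule upmax_attained)
    show "upmax N A - (\<Sum>j<N. w j) \<le> upmax N (\<lambda>i j. A i j - w j)"
      using upmax_ge[OF \<pi>, of "\<lambda>i j. A i j - w j"] by (simp add: opt sum_eq[OF \<pi>])
  qed
qed

lemma upmax_max_eq_Max_column_choices:
  "upmax N (\<lambda>i j. max (A i j) (B i j)) =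
     Max ((\<lambda>E. upmax N (\<lambda>i j. if j \<in> E then A i j else B i j)) ` Pow {..<N})"
proof (rule antisym)
  obtain \<pi> where \<pi>: "\<pi> permutes {..<N}"
    and opt: "upmax N (\<lambda>i j. max (A i j) (B i j)) = (\<Sum>i<N. max (A i (\<pi> i)) (B i (\<pi> i)))"
    by (rule upmax_attained)
  define E where "E = {j. j < N \<and> B (inv \<pi> j) j \<le> A (inv \<pi> j) j}"
  have E: "E \<in> Pow {..<N}"
    by (auto simp: E_def)
  have "(\<Sum>i<N. max (A i (\<pi> i)) (B i (\<pi> i))) =
        (\<Sum>i<N. if \<pi> i \<in> E then A i (\<pi> i) else B i (\<pi> i))"
    using permutes_in_image[OF \<pi>] permutes_inverses(2)[OF \<pi>]
    by (intro sum.cong) (auto simp: E_def max_def)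
  also have "\<dots> \<le> upmax N (\<lambda>i j. if j \<in> E then A i j else B i j)"
    by (rule upmax_ge[OF \<pi>])
  also have "\<dots> \<le> Max ((\<lambda>E. upmax N (\<lambda>i j. if j \<in> E then A i j else B i j)) ` Pow {..<N})"
    by (rule Max_ge) (use E in auto)
  finally show "upmax N (\<lambda>i j. max (A i j) (B i j)) \<le> \<dots>"
    unfolding opt .
next
  show "Max ((\<lambda>E. upmax N (\<lambda>i j. if j \<in> E then A i j else B i j)) ` Pow {..<N})
        \<le> upmax N (\<lambda>i j. max (A i j) (B i j))"
    by (rule Max.boundedI) (auto intro!: upmax_mono)
qed

definition col_shift :: "nat set \<Rightarrow> nat \<Rightarrow> nat" where
  "col_shift E j = (if j \<in> E then Suc j else j)"

lemma sum_col_shift_exchange: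
  fixes F :: "nat \<Rightarrow> nat \<Rightarrow> real"
  assumes convex: "\<And>i x. 2 * F i (Suc x) \<le> F i x + F i (Suc (Suc x))"
    and j: "Suc j < N" "j \<in> E" "Suc j \<notin> E"
    and \<pi>: "\<pi> permutes {..<N}"
  obtains \<sigma> where "\<sigma> permutes {..<N}"
    and "(\<Sum>i<N. F i (col_shift E (\<pi> i))) \<le> (\<Sum>i<N. F i (col_shift (insert (Suc j) (E - {j})) (\<sigma> i)))"
proof -
  let ?E' = "insert (Suc j) (E - {j})"
  define r r' where "r = inv \<pi> j" and "r' = inv \<pi> (Suc j)"
  have \<pi>r: "\<pi> r = j" "\<pi> r' = Suc j"
    using permutes_inverses(1)[OF \<pi>] by (simp_all add: r_def r'_def)
  have rN: "r < N" "r' < N" "r \<noteq> r'"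
    using \<pi>r j(1) permutes_in_image[OF \<pi>, of r] permutes_in_image[OF \<pi>, of r'] by auto
  have others: "\<pi> i \<noteq> j \<and> \<pi> i \<noteq> Suc j" if "i \<in> {..<N} - {r, r'}" for i
    using that permutes_inverses(2)[OF \<pi>] unfolding r_def r'_def by (metis DiffE insertCI)
  txt \<open>Convexity of rows \<open>r\<close> and \<open>r'\<close> at \<open>j+1\<close>: one of the two ways of moving
    apart their common column \<open>j+1\<close> does not decrease the sum.\<close>
  obtain \<sigma> where \<sigma>: "\<sigma> permutes {..<N}" "\<And>i. i \<in> {..<N} - {r, r'} \<Longrightarrow> \<sigma> i = \<pi> i"
    and gain: "F r (Suc j) + F r' (Suc j) \<le> F r (col_shift ?E' (\<sigma> r)) + F r' (col_shift ?E' (\<sigma> r'))"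
  proof (cases "F r (Suc j) + F r' (Suc j) \<le> F r j + F r' (Suc (Suc j))")
    case True
    then show ?thesis
      using that[OF \<pi>] \<pi>r by (simp add: col_shift_def)
  next
    case False
    have "\<pi> \<circ> transpose r r' permutes {..<N}"
      using rN by (intro permutes_compose[OF permutes_swap_id \<pi>]) auto
    moreover have "F r (Suc j) + F r' (Suc j) \<le> F r (Suc (Suc j)) + F r' j"
      using False convex[of r j] convex[of r' j] by linarith
    ultimately show ?thesis
      using that[of "\<pi> \<circ> transpose r r'"] \<pi>r rN by (simp add: col_shift_def)
  qed
  have "(\<Sum>i<N. F i (col_shift E (\<pi> i))) \<le> (\<Sum>i<N. F i (col_shift ?E' (\<sigma> i)))"
  proof (rule sum_le_sum_differing_at_two[of "{..<N}" r r'])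
    show "F i (col_shift E (\<pi> i)) = F i (col_shift ?E' (\<sigma> i))" if "i \<in> {..<N} - {r, r'}" for i
      using \<sigma>(2)[OF that] others[OF that] by (simp add: col_shift_def)
    show "F r (col_shift E (\<pi> r)) + F r' (col_shift E (\<pi> r'))
          \<le> F r (col_shift ?E' (\<sigma> r)) + F r' (col_shift ?E' (\<sigma> r'))"
      using gain \<pi>r j by (simp add: col_shift_def)
  qed (use rN in auto)
  with \<sigma>(1) that show ?thesis
    by blast
qed

lemma upmax_col_shift_exchange:
  assumes convex: "\<And>i x. 2 * F i (Suc x) \<le> F i x + F i (Suc (Suc x))"
    and j: "Suc j < N" "j \<in> E" "Suc j \<notin> E"
  shows "upmax N (\<lambda>i x. F i (col_shift E x))
         \<le> upmax N (\<lambda>i x. F i (col_shift (insert (Suc j) (E - {j})) x))"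
proof -
  obtain \<pi> where \<pi>: "\<pi> permutes {..<N}"
    and opt: "upmax N (\<lambda>i x. F i (col_shift E x)) = (\<Sum>i<N. F i (col_shift E (\<pi> i)))"
    by (rule upmax_attained)
  obtain \<sigma> where \<sigma>: "\<sigma> permutes {..<N}"
    and le: "(\<Sum>i<N. F i (col_shift E (\<pi> i))) \<le> (\<Sum>i<N. F i (col_shift (insert (Suc j) (E - {j})) (\<sigma> i)))"
    by (rule sum_col_shift_exchange[where F = F, OF convex j \<pi>])
  show ?thesis
    using le upmax_ge[OF \<sigma>, of "\<lambda>i x. F i (col_shift (insert (Suc j) (E - {j})) x)"]
    by (simp add: opt)
qed

lemma upclosed_eq_atLeastLessThan:
  assumes "E \<subseteq> {..<N}" and upclosed: "\<And>j. Suc j < N \<Longrightarrow> j \<in> E \<Longrightarrow> Suc j \<in> E"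
  shows "E = {N - card E..<N}"
proof (cases "E = {}")
  case False
  define m where "m = Min E"
  have fin: "finite E"
    using assms(1) finite_subset by blast
  have "m < N"
    using Min_in[OF fin False] assms(1) by (auto simp: m_def)
  have "x \<in> E" if "m \<le> x" "x < N" for x
    using that(1)
  proof (induction x rule: dec_induct)
    case base
    show ?case
      using Min_in[OF fin False] by (simp add: m_def)
  next
    case (step x)
    then show ?case
      using upclosed that(2) by simp
  qed
  moreover have "E \<subseteq> {m..<N}"
    using assms(1) fin by (auto simp: m_def)
  ultimately have "E = {m..<N}"
    by auto
  then show ?thesis
    using \<open>m < N\<close> by simp
qed simp

lemma upmax_col_shift_le_top:
  assumes convex: "\<And>i x. 2 * F i (Suc x) \<le> F i x + F i (Suc (Suc x))"
    and "E \<subseteq> {..<N}"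
  shows "upmax N (\<lambda>i x. F i (col_shift E x)) \<le> upmax N (\<lambda>i x. F i (col_shift {N - card E..<N} x))"
  using assms(2)
proof (induction E rule: measure_induct_rule[where f = "\<lambda>E. \<Sum>c\<in>E. N - c"])
  case (less E)
  show ?case
  proof (cases "\<exists>j. Suc j < N \<and> j \<in> E \<and> Suc j \<notin> E")
    case True
    then obtain j where j: "Suc j < N" "j \<in> E" "Suc j \<notin> E"
      by blast
    define E' where "E' = insert (Suc j) (E - {j})"
    have fin: "finite E"
      using less.prems finite_subset by blast
    have E': "E' \<subseteq> {..<N}" "card E' = card E"
      using less.prems j card_Suc_Diff1[OF fin j(2)] fin by (auto simp: E'_def)
    have "(\<Sum>c\<in>E'. N - c) < (\<Sum>c\<in>E. N - c)"
      using j fin by (simp add: E'_def sum.remove[of E j])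
    from less.IH[OF this E'(1)]
    have "upmax N (\<lambda>i x. F i (col_shift E' x)) \<le> upmax N (\<lambda>i x. F i (col_shift {N - card E..<N} x))"
      unfolding E'(2) .
    then show ?thesis
      using upmax_col_shift_exchange[where F = F, OF convex j] unfolding E'_def by linarith
  next
    case False
    then have "E = {N - card E..<N}"
      using upclosed_eq_atLeastLessThan[OF less.prems] by blast
    then show ?thesis
      by (metis order_refl)
  qed
qed

lemma upmax_max_shift_eq_Max_top:
  assumes convex: "\<And>i x. 2 * F i (Suc x) \<le> F i x + F i (Suc (Suc x))"
  shows "upmax N (\<lambda>i j. max (F i (Suc j) - a) (F i j)) =
         Max ((\<lambda>k. upmax N (\<lambda>i j. F i (col_shift {N - k..<N} j)) - real k * a) ` {0..N})"
proof -
  define g where "g E = upmax N (\<lambda>i j. F i (col_shift E j)) - real (card E) * a" for E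
  have choice: "upmax N (\<lambda>i j. if j \<in> E then F i (Suc j) - a else F i j) = g E"
    if "E \<subseteq> {..<N}" for E
  proof -
    have "upmax N (\<lambda>i j. if j \<in> E then F i (Suc j) - a else F i j)
          = upmax N (\<lambda>i j. F i (col_shift E j) - (if j \<in> E then a else 0))"
      by (rule upmax_cong) (simp add: col_shift_def)
    also have "\<dots> = upmax N (\<lambda>i j. F i (col_shift E j)) - (\<Sum>j<N. if j \<in> E then a else 0)"
      by (rule upmax_diff_column_weights)
    also have "(\<Sum>j<N. if j \<in> E then a else 0) = real (card E) * a"
      using that by (simp add: sum.If_cases Int_absorb1)
    finally show ?thesis
      unfolding g_def .
  qed
  have "upmax N (\<lambda>i j. max (F i (Suc j) - a) (F i j)) = Max (g ` Pow {..<N})"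
    unfolding upmax_max_eq_Max_column_choices using choice by (intro arg_cong[where f = Max] image_cong) auto
  also have "\<dots> = Max ((\<lambda>k. g {N - k..<N}) ` {0..N})"
  proof (rule antisym)
    show "Max (g ` Pow {..<N}) \<le> Max ((\<lambda>k. g {N - k..<N}) ` {0..N})"
    proof (rule Max.boundedI)
      fix y assume "y \<in> g ` Pow {..<N}"
      then obtain E where E: "E \<subseteq> {..<N}" and y: "y = g E"
        by blast
      have "card E \<le> N"
        using card_mono[OF _ E] by simp
      then have "y \<le> g {N - card E..<N}"
        using upmax_col_shift_le_top[where F = F, OF convex E] by (simp add: y g_def)
      also have "\<dots> \<le> Max ((\<lambda>k. g {N - k..<N}) ` {0..N})"
        using \<open>card E \<le> N\<close> by (intro Max_ge) auto
      finally show "y \<le> Max ((\<lambda>k. g {N - k..<N}) ` {0..N})" .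
    qed auto
  next
    show "Max ((\<lambda>k. g {N - k..<N}) ` {0..N}) \<le> Max (g ` Pow {..<N})"
      by (rule Max.boundedI) (auto intro!: Max_ge)
  qed
  also have "\<dots> = Max ((\<lambda>k. upmax N (\<lambda>i j. F i (col_shift {N - k..<N} j)) - real k * a) ` {0..N})"
    by (intro arg_cong[where f = Max] image_cong) (auto simp: g_def)
  finally show ?thesis .
qed

lemma ueta_Suc_l:
  "ueta a1 a2 a3 p c (l + 1) m n s = max (ueta a1 a2 a3 p c l m n (s + 1) - a1) (ueta a1 a2 a3 p c l m n s)"
  unfolding ueta_def by (simp add: algebra_simps max_def)

lemma uphi_Suc_l:
  "uphi a1 a2 a3 p c c' (l + 1) m n s
   = max (uphi a1 a2 a3 p c c' l m n (s + 1) - a1) (uphi a1 a2 a3 p c c' l m n s)"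
  unfolding uphi_def ueta_Suc_l by (simp add: max_def)

lemma uphi_convex:
  "2 * uphi a1 a2 a3 p c c' l m n (s + 1) \<le> uphi a1 a2 a3 p c c' l m n s + uphi a1 a2 a3 p c c' l m n (s + 2)"
proof -
  have affine: "ueta a1 a2 a3 p c l m n (s + t) = ueta a1 a2 a3 p c l m n s + p * of_int t" for p c t
    unfolding ueta_def by (simp add: algebra_simps)
  show ?thesis
    unfolding uphi_def using affine[of p c] affine[of "-p" c'] by (simp add: max_def)
qed

lemma sorted_list_of_set_remove_two:
  assumes "k \<le> N"
  shows "sorted_list_of_set ({0..N+1} - {N - k, N + 1}) = map (col_shift {N - k..<N}) [0..<N]"
proof -
  let ?h = "col_shift {N - k..<N}"
  have "sorted_wrt (<) (map ?h [0..<N])"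
    by (auto simp: sorted_wrt_map sorted_wrt_iff_nth_less col_shift_def)
  moreover have "set (map ?h [0..<N]) = {0..N+1} - {N - k, N + 1}"
  proof (intro equalityI subsetI)
    fix x assume "x \<in> set (map ?h [0..<N])"
    then show "x \<in> {0..N+1} - {N - k, N + 1}"
      using assms by (auto simp: col_shift_def)
  next
    fix x assume x: "x \<in> {0..N+1} - {N - k, N + 1}"
    show "x \<in> set (map ?h [0..<N])"
    proof (cases "x < N - k")
      case True
      then have "x = ?h x" "x < N"
        by (auto simp: col_shift_def)
      then show ?thesis
        by (metis atLeastLessThan_iff image_eqI le0 set_map set_upt)
    next
      case False
      then have "x = ?h (x - 1)" "x - 1 < N"
        using x by (auto simp: col_shift_def)
      then show ?thesis
        by (metis atLeastLessThan_iff image_eqI le0 set_map set_upt)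
    qed
  qed
  moreover have "length (map ?h [0..<N]) = card ({0..N+1} - {N - k, N + 1})"
    using assms by (simp add: card_Diff_subset)
  ultimately show ?thesis
    by (metis finite_Diff finite_atLeastAtMost sorted_list_of_set_unique)
qed

theorem lemma6:
  fixes N :: nat and a1 a2 a3 :: real and p c c' :: "nat \<Rightarrow> real" and l m n s :: int
  assumes "N \<ge> 1" and "a1 > a2" and "a2 > a3"
  shows "utau N a1 a2 a3 p c c' s (l + 1) m n =
         Max ((\<lambda>k1. utauc N a1 a2 a3 p c c' l m n s (N - k1) (N + 1) - real k1 * a1) ` {0..N})"
proof -
  define F where "F i x = uphi a1 a2 a3 (p i) (c i) (c' i) l m n (s + int x)" for i x
  have convex: "2 * F i (Suc x) \<le> F i x + F i (Suc (Suc x))" for i x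
    using uphi_convex[of a1 a2 a3 "p i" "c i" "c' i" l m n "s + int x"]
    by (simp add: F_def ac_simps)
  have "utau N a1 a2 a3 p c c' s (l + 1) m n = upmax N (\<lambda>i j. max (F i (Suc j) - a1) (F i j))"
    unfolding utau_def F_def uphi_Suc_l by (simp add: ac_simps)
  also have "\<dots> = Max ((\<lambda>k. upmax N (\<lambda>i j. F i (col_shift {N - k..<N} j)) - real k * a1) ` {0..N})"
    by (rule upmax_max_shift_eq_Max_top[where F = F, OF convex])
  also have "\<dots> = Max ((\<lambda>k1. utauc N a1 a2 a3 p c c' l m n s (N - k1) (N + 1) - real k1 * a1) ` {0..N})"
    unfolding utauc_def F_def
    by (intro arg_cong[where f = Max] image_cong refl arg_cong2[where f = minus] upmax_cong)
      (use sorted_list_of_set_remove_two in simp)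
  finally show ?thesis .
qed

end
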